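(* Let $d\ge2$ and $0\le N\le d$. Define the restricted Haar ensemble $\mathcal U_{\rm RH}$ as the distribution of the $d\times d$ unitary $U=\begin{pmatrix}Q&0\\0&V\end{pmatrix}$, where $Q=\mathrm{diag}(e^{i\phi_1},\dots,e^{i\phi_N})$ with $\phi_1,\dots,\phi_N$ i.i.d. uniform on $[0,2\pi)$, and $V$ is Haar-distributed on $U(d-N)$ independent of $Q$ (for $N=d-1$, $V=e^{i\phi}$ with $\phi$ uniform on $[0,2\pi)$; for $N=d$ the block $V$ is absent). Let $\mathcal F^{(2)}_{\rm RH}=\mathbb E\,|\operatorname{tr}(U^\dagger U')|^4$ with $U,U'$ independent draws from $\mathcal U_{\rm RH}$. Then $$\mathcal F^{(2)}_{\rm RH}=\begin{cases}2N^2+3N+2,& 0\le N\le d-2,\\ 2d^2-d,& N\in\{d-1,d\}.\end{cases}$$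
   Context: The $k$-th frame potential of an ensemble $\mathcal U$ of unitaries is $\mathcal F^{(k)}_{\mathcal U}=\int_{\mathcal U}dU\,dU'\,|\operatorname{tr}(U^\dagger U')|^{2k}$ with $U,U'$ independent; for the Haar ensemble on $U(m)$ with $m\ge k$ it equals $k!$. The block structure is with respect to a basis in which the first $N$ basis vectors correspond to the $N$ orthogonal input/target data states. *)

theory Defs
  imports "HOL-Probability.Probability"
begin

text \<open>Square complex matrices of variable size m are represented as functions
  nat => nat => complex; only the entries with indices below m are meaningful.\<close>

type_synonym cmat = "nat \<Rightarrow> nat \<Rightarrow> complex"

definition matspace :: "cmat measure" where
  "matspace = PiM UNIV (\<lambda>_. PiM UNIV (\<lambda>_. borel))"

definition mmult :: "nat \<Rightarrow> cmat \<Rightarrow> cmat \<Rightarrow> cmat" where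
  "mmult m A B = (\<lambda>i j. if i < m \<and> j < m then (\<Sum>k<m. A i k * B k j) else 0)"

definition madj :: "nat \<Rightarrow> cmat \<Rightarrow> cmat" where
  "madj m A = (\<lambda>i j. if i < m \<and> j < m then cnj (A j i) else 0)"

definition mone :: "nat \<Rightarrow> cmat" where
  "mone m = (\<lambda>i j. if i < m \<and> i = j then 1 else 0)"

definition mtrace :: "nat \<Rightarrow> cmat \<Rightarrow> complex" where
  "mtrace m A = (\<Sum>i<m. A i i)"

definition unitary_mat :: "nat \<Rightarrow> cmat \<Rightarrow> bool" where
  "unitary_mat m V \<longleftrightarrow> (\<forall>i j. \<not> (i < m \<and> j < m) \<longrightarrow> V i j = 0)
                         \<and> mmult m (madj m V) V = mone m"

text \<open>Haar measure on U(m): a probability measure on matrices, concentrated on U(m),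
  invariant under left multiplication by every element of U(m)
  (this characterises the Haar probability measure of the compact group U(m)).\<close>
definition haar_unitary :: "nat \<Rightarrow> cmat measure \<Rightarrow> bool" where
  "haar_unitary m H \<longleftrightarrow> prob_space H \<and> sets H = sets matspace
     \<and> (AE V in H. unitary_mat m V)
     \<and> (\<forall>W. unitary_mat m W \<longrightarrow> distr H matspace (mmult m W) = H)"

definition blockU :: "nat \<Rightarrow> nat \<Rightarrow> (nat \<Rightarrow> real) \<Rightarrow> cmat \<Rightarrow> cmat" where
  "blockU d N \<phi> V = (\<lambda>i j.
     if i < N \<and> j < N then (if i = j then exp (\<i> * complex_of_real (\<phi> i)) else 0)
     else if N \<le> i \<and> i < d \<and> N \<le> j \<and> j < d then V (i - N) (j - N)
     else 0)"

definition RH_ensemble :: "nat \<Rightarrow> nat \<Rightarrow> cmat measure \<Rightarrow> cmat measure" where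
  "RH_ensemble d N H =
     distr (PiM {..<N} (\<lambda>_. uniform_measure lborel {0..<2*pi}) \<Otimes>\<^sub>M H) matspace
           (\<lambda>(\<phi>, V). blockU d N \<phi> V)"

definition frame_potential2 :: "nat \<Rightarrow> cmat measure \<Rightarrow> real" where
  "frame_potential2 d \<mu> =
     (\<integral>p. (cmod (mtrace d (mmult d (madj d (fst p)) (snd p)))) ^ 4 \<partial>(\<mu> \<Otimes>\<^sub>M \<mu>))"

end

theory Submission
  imports Defs
begin

text \<open>Write U = diag(Q, V) and U' = diag(Q', V'). Then tr(U* U') = X + T, where
  X = sum_j exp(i(phi'_j - phi_j)) is a sum of N independent uniform phases and T = tr(V* V').
  By left invariance of the Haar measure, T is distributed like tr W for W Haar on U(m),
  m = d - N, and invariance under W |-> iW kills E T, E T^2 and E |T|^2 T, so that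
  E |X + T|^4 = E |X|^4 + 4 E |X|^2 E |T|^2 + E |T|^4.
  Adding one phase at a time gives E |X|^2 = N and E |X|^4 = 2N^2 - N. For the Haar trace,
  E |tr W|^2 = min 1 m and E |tr W|^4 = min 2 m; the latter reduces to the Weingarten values
  E |W_0c|^4 = 2/(m(m+1)) and E |W_0c|^2 |W_1c'|^2 = 1/(m^2 - 1) for c \<noteq> c', which follow from
  invariance under row permutations, diagonal phases and a Hadamard rotation of the first two
  rows, together with the orthonormality of the columns.\<close>

lemma of_nat_add_one_neq_zero: "(of_nat n + 1 :: 'a::semiring_char_0) \<noteq> 0"
  by (metis of_nat_Suc of_nat_eq_0_iff add.commute nat.simps(3))

lemma real_le_two_power2: "real n \<le> 2 * real n ^ 2"
  by (cases n) (auto simp: power2_eq_square algebra_simps)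

lemma sum_lessThan_2: "(\<Sum>x<2. g x) = g 0 + g (1::nat)"
  for g :: "nat \<Rightarrow> 'a::comm_monoid_add"
  by (simp add: numeral_2_eq_2)

lemma sum_lessThan_add: "(\<Sum>i<N + k. f i) = (\<Sum>i<N. f i) + (\<Sum>a<k. f (N + a))"
  for f :: "nat \<Rightarrow> 'a::comm_monoid_add"
  by (induct k) (simp_all add: ac_simps)

lemma double_sum_diag_offdiag:
  "(\<Sum>a<m. \<Sum>b<m. if a = b then X else Y) = of_nat m * X + of_nat m * (of_nat m - 1) * Y"
  for X Y :: "'a::comm_ring_1"
proof -
  have "(\<Sum>b<m. if a = b then X else Y) = X + (of_nat m - 1) * Y" if "a < m" for a
  proof -
    have "(\<Sum>b<m. if a = b then X else Y) = X + (\<Sum>b\<in>{..<m} - {a}. if a = b then X else Y)"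
      using that by (subst sum.remove[of _ a]) auto
    also have "(\<Sum>b\<in>{..<m} - {a}. if a = b then X else Y) = (\<Sum>b\<in>{..<m} - {a}. Y)"
      by (rule sum.cong) auto
    finally show ?thesis using that by simp
  qed
  then have "(\<Sum>a<m. \<Sum>b<m. if a = b then X else Y) = (\<Sum>a<m. X + (of_nat m - 1) * Y)"
    by (intro sum.cong) auto
  then show ?thesis by (simp add: algebra_simps)
qed

lemma double_sum_pair:
  fixes X :: "'a::comm_semiring_1" and i j m :: nat
  assumes "i < m" "j < m"
  shows "(\<Sum>k<m. \<Sum>l<m. if (k = i \<and> l = j) \<or> (k = j \<and> l = i) then X else 0)
       = (if i = j then X else 2 * X)"
proof -
  have "(\<Sum>l<m. if (k = i \<and> l = j) \<or> (k = j \<and> l = i) then X else 0)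
      = (if k = i then X else 0) + (if k = j \<and> i \<noteq> j then X else 0)" for k
  proof -
    have "(\<Sum>l<m. if (k = i \<and> l = j) \<or> (k = j \<and> l = i) then X else 0)
        = (\<Sum>l<m. (if l = j then (if k = i then X else 0) else 0)
                 + (if l = i then (if k = j \<and> i \<noteq> j then X else 0) else 0))"
      by (rule sum.cong) auto
    also have "\<dots> = (if k = i then X else 0) + (if k = j \<and> i \<noteq> j then X else 0)"
      using assms by (simp add: sum.distrib)
    finally show ?thesis .
  qed
  then show ?thesis using assms by (simp add: sum.distrib mult_2)
qed

lemma borel_measurable_cnj [measurable (raw)]:
  "f \<in> borel_measurable M \<Longrightarrow> (\<lambda>x. cnj (f x)) \<in> borel_measurable M"
  by (rule borel_measurable_continuous_on[where f=cnj])
    (auto intro: linear_continuous_on bounded_linear_cnj)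

lemma measurable_matspace_entry [measurable]: "(\<lambda>V. V i j) \<in> borel_measurable matspace"
proof -
  have "(\<lambda>V::cmat. V i) \<in> measurable (PiM UNIV (\<lambda>_. PiM UNIV (\<lambda>_. borel))) (PiM UNIV (\<lambda>_. borel))"
    by (rule measurable_component_singleton) simp
  moreover have "(\<lambda>v::nat\<Rightarrow>complex. v j) \<in> measurable (PiM UNIV (\<lambda>_. borel)) borel"
    by (rule measurable_component_singleton) simp
  ultimately show ?thesis unfolding matspace_def by (rule measurable_compose)
qed

lemma measurable_matspaceI:
  assumes "\<And>i j. (\<lambda>x. f x i j) \<in> borel_measurable M"
  shows "f \<in> measurable M matspace"
proof -
  have "(\<lambda>x i. (\<lambda>x j. f x i j) x) \<in> measurable M (PiM UNIV (\<lambda>_. PiM UNIV (\<lambda>_. borel)))"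
    by (intro measurable_PiM_single') (use assms in \<open>auto simp: space_PiM PiE_def extensional_def\<close>)
  then show ?thesis unfolding matspace_def by simp
qed

lemma space_matspace: "space matspace = UNIV"
  by (auto simp: matspace_def space_PiM PiE_def extensional_def)

lemma measurable_mmult: "mmult m W \<in> measurable matspace matspace"
proof (rule measurable_matspaceI)
  fix i j
  have "(\<lambda>V. mmult m W V i j) = (\<lambda>V. if i < m \<and> j < m then \<Sum>k<m. W i k * V k j else 0)"
    by (simp add: mmult_def)
  then show "(\<lambda>V. mmult m W V i j) \<in> borel_measurable matspace" by simp
qed

lemma measurable_mtrace [measurable]: "mtrace m \<in> borel_measurable matspace"
  unfolding mtrace_def[abs_def] by measurable

lemma mmult_assoc: "mmult m A (mmult m B C) = mmult m (mmult m A B) C"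
proof (intro ext)
  fix i j
  show "mmult m A (mmult m B C) i j = mmult m (mmult m A B) C i j"
  proof (cases "i < m \<and> j < m")
    case True
    have "(\<Sum>k<m. A i k * mmult m B C k j) = (\<Sum>k<m. \<Sum>l<m. A i k * B k l * C l j)"
      by (rule sum.cong) (auto simp: mmult_def True sum_distrib_left mult.assoc)
    also have "\<dots> = (\<Sum>l<m. \<Sum>k<m. A i k * B k l * C l j)" by (rule sum.swap)
    also have "\<dots> = (\<Sum>l<m. mmult m A B i l * C l j)"
      by (rule sum.cong) (auto simp: mmult_def True sum_distrib_right)
    finally show ?thesis using True by (simp add: mmult_def)
  qed (auto simp: mmult_def)
qed

lemma mtrace_mmult_mone: "mtrace m (mmult m (mone m) W) = mtrace m W"
proof -
  have "mmult m (mone m) W i i = W i i" if "i < m" for i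
  proof -
    have "(\<Sum>k<m. mone m i k * W k i) = (\<Sum>k<m. if k = i then W k i else 0)"
      by (rule sum.cong) (auto simp: mone_def)
    then show ?thesis using that by (simp add: mmult_def)
  qed
  then show ?thesis by (simp add: mtrace_def)
qed

lemma mtrace_unitary_cancel:
  assumes "unitary_mat m V"
  shows "mtrace m (mmult m (madj m V) (mmult m V W)) = mtrace m W"
  using assms by (simp add: mmult_assoc unitary_mat_def mtrace_mmult_mone)

lemma mtrace_madj_mmult: "mtrace m (mmult m (madj m A) B) = (\<Sum>i<m. \<Sum>k<m. cnj (A k i) * B k i)"
  unfolding mtrace_def by (rule sum.cong[OF refl]) (auto simp: mmult_def madj_def intro!: sum.cong)

lemma measurable_mtrace_madj_mmult:
  assumes "f \<in> measurable M matspace" "g \<in> measurable M matspace"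
  shows "(\<lambda>x. mtrace d (mmult d (madj d (f x)) (g x))) \<in> borel_measurable M"
proof -
  have [measurable]: "(\<lambda>x. f x a b) \<in> borel_measurable M" "(\<lambda>x. g x a b) \<in> borel_measurable M"
    for a b :: nat
    using assms by (auto intro: measurable_compose[OF _ measurable_matspace_entry])
  show ?thesis unfolding mtrace_madj_mmult by measurable
qed

lemma unitary_column_norm:
  assumes "unitary_mat m V" "c < m"
  shows "(\<Sum>a<m. V a c * cnj (V a c)) = 1"
proof -
  have "mmult m (madj m V) V c c = 1" using assms by (simp add: unitary_mat_def mone_def)
  then show ?thesis using assms(2) by (simp add: mmult_def madj_def mult.commute)
qed

lemma unitary_column_orth:
  assumes "unitary_mat m V" "c < m" "c' < m" "c \<noteq> c'"
  shows "(\<Sum>a<m. cnj (V a c) * V a c') = 0"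
proof -
  have "mmult m (madj m V) V c c' = 0" using assms by (simp add: unitary_mat_def mone_def)
  then show ?thesis using assms(2,3) by (simp add: mmult_def madj_def)
qed

lemma unitary_entry_bound:
  assumes "unitary_mat m V"
  shows "cmod (V a c) \<le> 1"
proof (cases "a < m \<and> c < m")
  case True
  have "complex_of_real (\<Sum>k<m. cmod (V k c) ^ 2) = (\<Sum>k<m. V k c * cnj (V k c))"
    by (simp only: of_real_sum complex_norm_square)
  also have "\<dots> = 1" using unitary_column_norm[OF assms] True by blast
  finally have "(\<Sum>k<m. cmod (V k c) ^ 2) = 1" by (simp only: of_real_eq_1_iff)
  moreover have "cmod (V a c) ^ 2 \<le> (\<Sum>k<m. cmod (V k c) ^ 2)"
    using True by (intro member_le_sum) auto
  ultimately show ?thesis by (simp add: power_le_one_iff)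
next
  case False
  then show ?thesis using assms by (simp add: unitary_mat_def)
qed

lemma unitary_trace_bound:
  assumes "unitary_mat m V"
  shows "cmod (mtrace m V) \<le> real m"
proof -
  have "cmod (mtrace m V) \<le> (\<Sum>i<m. cmod (V i i))" unfolding mtrace_def by (rule norm_sum)
  also have "\<dots> \<le> (\<Sum>i<m. 1)" by (intro sum_mono unitary_entry_bound[OF assms])
  finally show ?thesis by simp
qed

definition diag_mat :: "nat \<Rightarrow> (nat \<Rightarrow> complex) \<Rightarrow> cmat" where
  "diag_mat m z = (\<lambda>i k. if i < m \<and> i = k then z i else 0)"

lemma mmult_diag_mat:
  "mmult m (diag_mat m z) V = (\<lambda>i j. if i < m \<and> j < m then z i * V i j else 0)"
proof (intro ext)
  fix i j
  show "mmult m (diag_mat m z) V i j = (if i < m \<and> j < m then z i * V i j else 0)"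
  proof (cases "i < m \<and> j < m")
    case True
    have "(\<Sum>k<m. diag_mat m z i k * V k j) = (\<Sum>k<m. if k = i then z i * V k j else 0)"
      by (rule sum.cong) (auto simp: diag_mat_def)
    then show ?thesis using True by (simp add: mmult_def)
  qed (auto simp: mmult_def)
qed

lemma unitary_diag_mat:
  assumes "\<And>i. i < m \<Longrightarrow> cmod (z i) = 1"
  shows "unitary_mat m (diag_mat m z)"
  unfolding unitary_mat_def
proof (intro conjI allI impI)
  fix i j :: nat
  assume "\<not> (i < m \<and> j < m)"
  then show "diag_mat m z i j = 0" by (auto simp: diag_mat_def)
next
  have unit: "cnj (z i) * z i = 1" if "i < m" for i
    using complex_norm_square[of "z i"] assms[OF that] by (simp add: mult.commute)
  have adj: "madj m (diag_mat m z) = diag_mat m (\<lambda>i. cnj (z i))"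
    by (intro ext) (auto simp: madj_def diag_mat_def)
  show "mmult m (madj m (diag_mat m z)) (diag_mat m z) = mone m"
    unfolding adj mmult_diag_mat by (intro ext) (auto simp: unit diag_mat_def mone_def)
qed

lemma mtrace_mmult_diag_mat_const: "mtrace m (mmult m (diag_mat m (\<lambda>_. z)) V) = z * mtrace m V"
  by (simp add: mtrace_def mmult_diag_mat sum_distrib_left)

definition perm_mat :: "nat \<Rightarrow> (nat \<Rightarrow> nat) \<Rightarrow> cmat" where
  "perm_mat m \<sigma> = (\<lambda>i k. if i < m \<and> k < m \<and> k = \<sigma> i then 1 else 0)"

lemma mmult_perm_mat:
  assumes "\<And>i. i < m \<Longrightarrow> \<sigma> i < m"
  shows "mmult m (perm_mat m \<sigma>) V = (\<lambda>i j. if i < m \<and> j < m then V (\<sigma> i) j else 0)"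
proof (intro ext)
  fix i j
  show "mmult m (perm_mat m \<sigma>) V i j = (if i < m \<and> j < m then V (\<sigma> i) j else 0)"
  proof (cases "i < m \<and> j < m")
    case True
    have "(\<Sum>k<m. perm_mat m \<sigma> i k * V k j) = (\<Sum>k<m. if k = \<sigma> i then V k j else 0)"
      by (rule sum.cong) (auto simp: perm_mat_def True)
    then show ?thesis using assms True by (simp add: mmult_def)
  qed (auto simp: mmult_def)
qed

lemma unitary_perm_mat:
  assumes "bij_betw \<sigma> {..<m} {..<m}"
  shows "unitary_mat m (perm_mat m \<sigma>)"
  unfolding unitary_mat_def
proof (intro conjI allI impI ext)
  fix i j :: nat
  assume "\<not> (i < m \<and> j < m)"
  then show "perm_mat m \<sigma> i j = 0" by (auto simp: perm_mat_def)
next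
  fix i j
  show "mmult m (madj m (perm_mat m \<sigma>)) (perm_mat m \<sigma>) i j = mone m i j"
  proof (cases "i < m \<and> j < m")
    case True
    have \<sigma>: "\<And>k. k < m \<Longrightarrow> \<sigma> k < m" using assms by (auto simp: bij_betw_def)
    have "(\<Sum>k<m. madj m (perm_mat m \<sigma>) i k * perm_mat m \<sigma> k j)
        = (\<Sum>k<m. (\<lambda>x. if x = i then (if x = j then 1 else 0) else 0) (\<sigma> k))"
      by (rule sum.cong) (auto simp: madj_def perm_mat_def True \<sigma>)
    also have "\<dots> = (\<Sum>x<m. if x = i then (if x = j then 1 else 0) else 0)"
      by (rule sum.reindex_bij_betw[OF assms])
    finally show ?thesis using True by (simp add: mmult_def mone_def)
  qed (auto simp: mmult_def mone_def)
qed

lemma obtain_perm_pair: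
  fixes a b m :: nat
  assumes "a < m" "b < m" "a \<noteq> b"
  obtains \<sigma> where "bij_betw \<sigma> {..<m} {..<m}" "\<sigma> 0 = a" "\<sigma> 1 = b"
proof
  let ?\<tau> = "Transposition.transpose 0 a"
  show "bij_betw (?\<tau> \<circ> Transposition.transpose 1 (?\<tau> b)) {..<m} {..<m}"
    using assms
    by (intro bij_betw_trans[where B="{..<m}"] bij_betw_transpose_iff) (auto simp: Transposition.transpose_def)
  show "(?\<tau> \<circ> Transposition.transpose 1 (?\<tau> b)) 0 = a"
    "(?\<tau> \<circ> Transposition.transpose 1 (?\<tau> b)) 1 = b"
    using assms by (auto simp: Transposition.transpose_def)
qed

definition inv_sqrt2 :: complex where
  "inv_sqrt2 = complex_of_real (sqrt 2 / 2)"

lemma inv_sqrt2_sq: "inv_sqrt2 * inv_sqrt2 = 1/2"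
proof -
  have "(sqrt 2 / 2) * (sqrt 2 / 2) = (1/2::real)" by (simp add: field_simps)
  then show ?thesis unfolding inv_sqrt2_def by (metis of_real_mult of_real_divide of_real_1 of_real_numeral)
qed

lemma cnj_inv_sqrt2 [simp]: "cnj inv_sqrt2 = inv_sqrt2"
  by (simp add: inv_sqrt2_def)

definition hadamard_mat :: "nat \<Rightarrow> cmat" where
  "hadamard_mat m = (\<lambda>i k. if i < 2 \<and> k < 2 then (if i = 1 \<and> k = 1 then - inv_sqrt2 else inv_sqrt2)
                       else if i < m \<and> i = k then 1 else 0)"

lemma mmult_hadamard_mat_row0:
  assumes "2 \<le> m" "c < m"
  shows "mmult m (hadamard_mat m) V 0 c = inv_sqrt2 * (V 0 c + V 1 c)"
proof -
  have "(\<Sum>k<m. hadamard_mat m 0 k * V k c) = (\<Sum>k\<in>{0,1}. inv_sqrt2 * V k c)"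
    by (rule sum.mono_neutral_cong_right) (use assms in \<open>auto simp: hadamard_mat_def\<close>)
  then show ?thesis using assms by (simp add: mmult_def distrib_left)
qed

lemma unitary_hadamard_mat:
  assumes "2 \<le> m"
  shows "unitary_mat m (hadamard_mat m)"
  unfolding unitary_mat_def
proof (intro conjI allI impI ext)
  fix i j :: nat
  assume "\<not> (i < m \<and> j < m)"
  then show "hadamard_mat m i j = 0" using assms by (auto simp: hadamard_mat_def)
next
  fix i j
  show "mmult m (madj m (hadamard_mat m)) (hadamard_mat m) i j = mone m i j"
  proof (cases "i < m \<and> j < m")
    case True
    let ?f = "\<lambda>k. madj m (hadamard_mat m) i k * hadamard_mat m k j"
    have "{..<m} = {0, 1} \<union> {2..<m}" using assms by auto
    then have "(\<Sum>k<m. ?f k) = ?f 0 + ?f 1 + (\<Sum>k\<in>{2..<m}. ?f k)"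
      by (simp add: sum.union_disjoint)
    also have "(\<Sum>k\<in>{2..<m}. ?f k) = (\<Sum>k\<in>{2..<m}. if k = i then (if k = j then 1 else 0) else 0)"
      by (rule sum.cong) (auto simp: hadamard_mat_def madj_def True)
    also have "?f 0 + ?f 1 + \<dots> = (if i = j then 1 else 0)"
      using True assms
      by (cases "i < 2 \<and> j < 2") (auto simp: madj_def hadamard_mat_def less_2_cases_iff inv_sqrt2_sq)
    finally show ?thesis using True by (simp add: mmult_def mone_def)
  qed (auto simp: mmult_def mone_def)
qed

section \<open>Moments of a shifted random variable\<close>

lemma complex_norm_pow4: "complex_of_real (cmod z ^ 4) = (z * cnj z) ^ 2"
proof -
  have "complex_of_real (cmod z ^ 4) = (complex_of_real (cmod z ^ 2)) ^ 2"
    by (simp add: power_mult[symmetric])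
  then show ?thesis by (simp only: complex_norm_square)
qed

lemma nn_integral_affine_combination:
  assumes "prob_space M" and [measurable]: "p \<in> borel_measurable M" "q \<in> borel_measurable M"
    and "\<And>x. 0 \<le> p x" "\<And>x. 0 \<le> q x" "0 \<le> k" "0 \<le> r" "0 \<le> P" "0 \<le> Q"
    and "(\<integral>\<^sup>+x. ennreal (p x) \<partial>M) = ennreal P" "(\<integral>\<^sup>+x. ennreal (q x) \<partial>M) = ennreal Q"
  shows "(\<integral>\<^sup>+x. ennreal (p x + k * q x + r) \<partial>M) = ennreal (P + k * Q + r)"
proof -
  interpret prob_space M by fact
  have "(\<integral>\<^sup>+x. ennreal (p x + k * q x + r) \<partial>M) = (\<integral>\<^sup>+x. ennreal (p x) + ennreal k * ennreal (q x) + ennreal r \<partial>M)"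
    using assms by (intro nn_integral_cong) (simp add: ennreal_mult)
  also have "\<dots> = (\<integral>\<^sup>+x. ennreal (p x) \<partial>M) + ennreal k * (\<integral>\<^sup>+x. ennreal (q x) \<partial>M) + ennreal r"
    by (simp add: nn_integral_add nn_integral_cmult emeasure_space_1)
  also have "\<dots> = ennreal (P + k * Q + r)"
    using assms by (simp add: ennreal_mult)
  finally show ?thesis .
qed

lemma complex_norm_add_pow4:
  fixes x t :: complex
  defines "u \<equiv> x * cnj x"
  shows "complex_of_real (cmod (x + t) ^ 4) =
      u^2 + 4*u*(t * cnj t) + t^2 * cnj t^2 + 2*u*x*cnj t + 2*u*cnj x*t
      + x^2*cnj t^2 + cnj x^2*t^2 + 2*x*(t * cnj t^2) + 2*cnj x*(t^2 * cnj t)"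
proof -
  have "complex_of_real (cmod (x + t) ^ 4) = ((x + t) * cnj (x + t)) ^ 2"
    by (rule complex_norm_pow4)
  then show ?thesis unfolding u_def by (simp add: algebra_simps power2_eq_square)
qed

context prob_space
begin

lemma nn_integral_norm_shift_pow:
  fixes T :: "'a \<Rightarrow> complex"
  assumes [measurable]: "T \<in> borel_measurable M" and bound: "AE \<omega> in M. cmod (T \<omega>) \<le> B"
  shows "(\<integral>\<^sup>+\<omega>. ennreal (cmod (x + T \<omega>) ^ k) \<partial>M) = ennreal (expectation (\<lambda>\<omega>. cmod (x + T \<omega>) ^ k))"
proof (rule nn_integral_eq_integral)
  show "integrable M (\<lambda>\<omega>. cmod (x + T \<omega>) ^ k)"
  proof (rule integrable_const_bound[where B="(cmod x + B) ^ k"])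
    show "AE \<omega> in M. norm (cmod (x + T \<omega>) ^ k) \<le> (cmod x + B) ^ k"
      using bound
    proof eventually_elim
      case (elim \<omega>)
      have "cmod (x + T \<omega>) \<le> cmod x + B" using norm_triangle_ineq[of x "T \<omega>"] elim by linarith
      then show ?case by (simp add: power_mono)
    qed
  qed measurable
qed simp

lemma expectation_norm_shift_pow2:
  fixes T :: "'a \<Rightarrow> complex"
  assumes [measurable]: "T \<in> borel_measurable M" and bound: "AE \<omega> in M. cmod (T \<omega>) \<le> B"
    and mean: "expectation T = 0"
  shows "expectation (\<lambda>\<omega>. cmod (x + T \<omega>) ^ 2) = cmod x ^ 2 + expectation (\<lambda>\<omega>. cmod (T \<omega>) ^ 2)"
proof -
  have intT: "integrable M T" using bound by (intro integrable_const_bound[where B=B]) auto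
  have intT2: "integrable M (\<lambda>\<omega>. T \<omega> * cnj (T \<omega>))"
    using bound by (intro integrable_const_bound[where B="B * B"])
      (auto elim!: eventually_mono simp: norm_mult intro: mult_mono order_trans[OF norm_ge_zero])
  have expand: "complex_of_real (cmod (x + T \<omega>) ^ 2)
      = x * cnj x + x * cnj (T \<omega>) + cnj x * T \<omega> + T \<omega> * cnj (T \<omega>)" for \<omega>
    by (simp only: complex_norm_square) (simp add: algebra_simps)
  have "complex_of_real (expectation (\<lambda>\<omega>. cmod (x + T \<omega>) ^ 2))
      = expectation (\<lambda>\<omega>. x * cnj x + x * cnj (T \<omega>) + cnj x * T \<omega> + T \<omega> * cnj (T \<omega>))"
    by (simp only: expand integral_complex_of_real[symmetric])
  also have "\<dots> = x * cnj x + expectation (\<lambda>\<omega>. T \<omega> * cnj (T \<omega>))"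
    using intT intT2 mean by (simp add: prob_space)
  also have "\<dots> = complex_of_real (cmod x ^ 2 + expectation (\<lambda>\<omega>. cmod (T \<omega>) ^ 2))"
    by (simp only: complex_norm_square[symmetric] integral_complex_of_real of_real_add)
  finally show ?thesis by (simp only: of_real_eq_iff)
qed

text \<open>Expanding |x + T|^4 gives the monomials T^a (cnj T)^b with a, b \<le> 2; those with
  a \<noteq> b are the three assumed to have mean zero and their conjugates.\<close>

lemma expectation_norm_shift_pow4:
  fixes T :: "'a \<Rightarrow> complex"
  assumes [measurable]: "T \<in> borel_measurable M" and bound: "AE \<omega> in M. cmod (T \<omega>) \<le> B"
    and m1: "expectation T = 0" and m2: "expectation (\<lambda>\<omega>. T \<omega> ^ 2) = 0"
    and m3: "expectation (\<lambda>\<omega>. T \<omega> * cnj (T \<omega>) * T \<omega>) = 0"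
  shows "expectation (\<lambda>\<omega>. cmod (x + T \<omega>) ^ 4) =
     cmod x ^ 4 + 4 * cmod x ^ 2 * expectation (\<lambda>\<omega>. cmod (T \<omega>) ^ 2) + expectation (\<lambda>\<omega>. cmod (T \<omega>) ^ 4)"
proof -
  define P where "P a b \<omega> = T \<omega> ^ a * cnj (T \<omega>) ^ b" for a b :: nat and \<omega>
  have [measurable]: "P a b \<in> borel_measurable M" for a b unfolding P_def by measurable
  have intP: "integrable M (P a b)" for a b
  proof (rule integrable_const_bound[where B="max 1 B ^ (a + b)"])
    show "AE \<omega> in M. norm (P a b \<omega>) \<le> max 1 B ^ (a + b)"
      using bound by eventually_elim (auto simp: P_def norm_mult norm_power power_add intro!: mult_mono power_mono)
  qed measurable
  define u where "u = x * cnj x"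
  have expand: "complex_of_real (cmod (x + T \<omega>) ^ 4) =
      u^2 + 4*u*P 1 1 \<omega> + P 2 2 \<omega> + 2*u*x*P 0 1 \<omega> + 2*u*cnj x*P 1 0 \<omega>
      + x^2*P 0 2 \<omega> + cnj x^2*P 2 0 \<omega> + 2*x*P 1 2 \<omega> + 2*cnj x*P 2 1 \<omega>" for \<omega>
    unfolding complex_norm_add_pow4 u_def P_def by simp
  have vanish: "expectation (P 1 0) = 0" "expectation (P 0 1) = 0" "expectation (P 2 0) = 0"
    "expectation (P 0 2) = 0" "expectation (P 2 1) = 0" "expectation (P 1 2) = 0"
    using m1 m2 m3 Bochner_Integration.integral_cnj[of M "\<lambda>\<omega>. T \<omega> ^ 2"]
      Bochner_Integration.integral_cnj[of M "\<lambda>\<omega>. T \<omega> * cnj (T \<omega>) * T \<omega>"]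
    by (simp_all add: P_def[abs_def] power2_eq_square mult_ac)
  have moments: "expectation (P 1 1) = complex_of_real (expectation (\<lambda>\<omega>. cmod (T \<omega>) ^ 2))"
    "expectation (P 2 2) = complex_of_real (expectation (\<lambda>\<omega>. cmod (T \<omega>) ^ 4))"
  proof -
    have "P 1 1 = (\<lambda>\<omega>. complex_of_real (cmod (T \<omega>) ^ 2))"
      "P 2 2 = (\<lambda>\<omega>. complex_of_real (cmod (T \<omega>) ^ 4))"
      by (auto simp: P_def complex_norm_square complex_norm_pow4 power_mult_distrib simp del: of_real_power)
    then show "expectation (P 1 1) = complex_of_real (expectation (\<lambda>\<omega>. cmod (T \<omega>) ^ 2))"
      "expectation (P 2 2) = complex_of_real (expectation (\<lambda>\<omega>. cmod (T \<omega>) ^ 4))"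
      by (simp_all only: integral_complex_of_real)
  qed
  have u: "u = complex_of_real (cmod x ^ 2)" unfolding u_def by (simp only: complex_norm_square)
  have "complex_of_real (expectation (\<lambda>\<omega>. cmod (x + T \<omega>) ^ 4))
      = expectation (\<lambda>\<omega>. u^2 + 4*u*P 1 1 \<omega> + P 2 2 \<omega> + 2*u*x*P 0 1 \<omega> + 2*u*cnj x*P 1 0 \<omega>
          + x^2*P 0 2 \<omega> + cnj x^2*P 2 0 \<omega> + 2*x*P 1 2 \<omega> + 2*cnj x*P 2 1 \<omega>)"
    by (simp only: expand integral_complex_of_real[symmetric])
  also have "\<dots> = u^2 + 4*u*expectation (P 1 1) + expectation (P 2 2)
      + 2*u*x*expectation (P 0 1) + 2*u*cnj x*expectation (P 1 0)
      + x^2*expectation (P 0 2) + cnj x^2*expectation (P 2 0)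
      + 2*x*expectation (P 1 2) + 2*cnj x*expectation (P 2 1)"
    by (simp add: intP prob_space)
  also have "\<dots> = complex_of_real (cmod x ^ 4 + 4 * cmod x ^ 2 * expectation (\<lambda>\<omega>. cmod (T \<omega>) ^ 2)
      + expectation (\<lambda>\<omega>. cmod (T \<omega>) ^ 4))"
    unfolding vanish moments u by (simp add: power_mult[symmetric] algebra_simps)
  finally show ?thesis by (simp only: of_real_eq_iff)
qed

end

section \<open>Independent uniform phases\<close>

abbreviation uniform_phase :: "real measure" where
  "uniform_phase \<equiv> uniform_measure lborel {0..<2*pi}"

definition phases :: "nat \<Rightarrow> (nat \<Rightarrow> real) measure" where
  "phases N = PiM {..<N} (\<lambda>_. uniform_phase)"

definition phase_sum :: "nat \<Rightarrow> (nat \<Rightarrow> complex) \<Rightarrow> (nat \<Rightarrow> real) \<Rightarrow> complex" where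
  "phase_sum N c \<phi> = (\<Sum>j<N. c j * exp (\<i> * complex_of_real (\<phi> j)))"

lemma prob_space_uniform_phase: "prob_space uniform_phase"
  by (rule prob_space_uniform_measure) simp_all

lemma prob_space_phases: "prob_space (phases N)"
  unfolding phases_def by (intro prob_space_PiM prob_space_uniform_phase)

lemma measurable_phases_component: "j < N \<Longrightarrow> (\<lambda>\<phi>. \<phi> j) \<in> borel_measurable (phases N)"
  unfolding phases_def
  by (intro measurable_component_singleton[where M="\<lambda>_. uniform_phase", THEN measurable_compose])
    auto

lemma measurable_phase_sum [measurable]: "phase_sum N c \<in> borel_measurable (phases N)"
proof -
  have [measurable]: "j < N \<Longrightarrow> (\<lambda>\<phi>. \<phi> j) \<in> borel_measurable (phases N)" for j
    by (rule measurable_phases_component)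
  show ?thesis unfolding phase_sum_def[abs_def] by measurable
qed

lemma integral_uniform_phase_exp:
  assumes k: "k \<noteq> 0"
  shows "integral\<^sup>L uniform_phase (\<lambda>y. exp (\<i> * of_nat k * complex_of_real y)) = 0"
proof -
  let ?f = "\<lambda>y::real. exp (\<i> * of_nat k * complex_of_real y)"
  let ?g = "\<lambda>z::complex. exp (\<i> * of_nat k * z) / (\<i> * of_nat k)"
  have fm: "?f \<in> borel_measurable lborel" by measurable
  have density: "uniform_phase = density lborel (\<lambda>x. ennreal (indicator {0..<2*pi} x / (2*pi)))"
    unfolding uniform_measure_def
    by (intro arg_cong[where f="density lborel"] ext)
      (simp add: divide_ennreal ennreal_indicator[symmetric])
  have "integral\<^sup>L uniform_phase ?f = integral\<^sup>L lborel (\<lambda>x. (indicator {0..<2*pi} x / (2*pi)) *\<^sub>R ?f x)"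
    unfolding density by (rule integral_density) (auto simp: fm)
  also have "\<dots> = integral\<^sup>L lborel (\<lambda>x. (1/(2*pi)) *\<^sub>R (indicator {0..2*pi} x *\<^sub>R ?f x))"
  proof (rule integral_cong_AE)
    show "AE x in lborel. (indicator {0..<2*pi} x / (2*pi)) *\<^sub>R ?f x
        = (1/(2*pi)) *\<^sub>R (indicator {0..2*pi} x *\<^sub>R ?f x)"
      using AE_lborel_singleton[of "2*pi"] by eventually_elim (auto simp: indicator_def)
  qed measurable
  also have "\<dots> = (1/(2*pi)) *\<^sub>R integral\<^sup>L lborel (\<lambda>x. indicator {0..2*pi} x *\<^sub>R ?f x)"
    by (rule integral_scaleR_right)
  also have "integral\<^sup>L lborel (\<lambda>x. indicator {0..2*pi} x *\<^sub>R ?f x) = ?g (of_real (2*pi)) - ?g (of_real 0)"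
  proof (rule integral_FTC_atLeastAtMost)
    show "continuous_on {0..2*pi} ?f" by (intro continuous_intros)
  next
    fix x :: real
    have "(?g has_field_derivative ?f x) (at (of_real x))"
      using k by (auto intro!: derivative_eq_intros simp: field_simps)
    then show "((\<lambda>x. ?g (of_real x)) has_vector_derivative ?f x) (at x within {0..2*pi})"
      by (rule has_vector_derivative_real_field)
  qed simp
  also have "?g (of_real (2*pi)) - ?g (of_real 0) = 0"
  proof -
    have "exp (\<i> * of_nat k * complex_of_real (2*pi)) = exp (2 * of_real pi * \<i>) ^ k"
      by (simp add: exp_of_nat_mult[symmetric] mult_ac)
    then show ?thesis by simp
  qed
  finally show ?thesis by simp
qed

lemma nn_integral_uniform_phase_shift:
  assumes c: "cmod c = 1"
  shows "(\<integral>\<^sup>+y. ennreal (cmod (a + c * exp (\<i> * complex_of_real y)) ^ 4) \<partial>uniform_phase)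
      = ennreal (cmod a ^ 4 + 4 * cmod a ^ 2 + 1)"
    and "(\<integral>\<^sup>+y. ennreal (cmod (a + c * exp (\<i> * complex_of_real y)) ^ 2) \<partial>uniform_phase)
      = ennreal (cmod a ^ 2 + 1)"
proof -
  interpret prob_space uniform_phase by (rule prob_space_uniform_phase)
  let ?T = "\<lambda>y::real. c * exp (\<i> * complex_of_real y)"
  have norm_T: "cmod (?T y) = 1" for y using c by (simp add: norm_mult)
  have T_meas: "?T \<in> borel_measurable uniform_phase" by measurable
  have bound: "AE y in uniform_phase. cmod (?T y) \<le> 1" using norm_T by simp
  have m1: "expectation ?T = 0"
    using integral_uniform_phase_exp[of 1] by simp
  have "?T y ^ 2 = c^2 * exp (\<i> * of_nat 2 * complex_of_real y)" for y
    by (simp add: power_mult_distrib exp_of_nat_mult[symmetric] mult_ac)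
  then have m2: "expectation (\<lambda>y. ?T y ^ 2) = 0"
    using integral_uniform_phase_exp[of 2] by simp
  have "?T y * cnj (?T y) = 1" for y
    using complex_norm_square[of "?T y"] norm_T[of y] by simp
  then have m3: "expectation (\<lambda>y. ?T y * cnj (?T y) * ?T y) = 0"
    using m1 by simp
  show "(\<integral>\<^sup>+y. ennreal (cmod (a + ?T y) ^ 4) \<partial>uniform_phase) = ennreal (cmod a ^ 4 + 4 * cmod a ^ 2 + 1)"
    using nn_integral_norm_shift_pow[OF T_meas bound]
      expectation_norm_shift_pow4[OF T_meas bound m1 m2 m3] norm_T by (simp add: prob_space)
  show "(\<integral>\<^sup>+y. ennreal (cmod (a + ?T y) ^ 2) \<partial>uniform_phase) = ennreal (cmod a ^ 2 + 1)"
    using nn_integral_norm_shift_pow[OF T_meas bound]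
      expectation_norm_shift_pow2[OF T_meas bound m1] norm_T by (simp add: prob_space)
qed

lemma phase_sum_moments:
  assumes c: "\<And>j. cmod (c j) = 1"
  shows "(\<integral>\<^sup>+\<phi>. ennreal (cmod (phase_sum N c \<phi>) ^ 2) \<partial>phases N) = ennreal (real N) \<and>
         (\<integral>\<^sup>+\<phi>. ennreal (cmod (phase_sum N c \<phi>) ^ 4) \<partial>phases N) = ennreal (2 * real N ^ 2 - real N)"
proof (induction N)
  case 0
  interpret prob_space "phases 0" by (rule prob_space_phases)
  show ?case by (simp add: phase_sum_def)
next
  case (Suc N)
  interpret product_sigma_finite "\<lambda>_::nat. uniform_phase"
    by (simp add: product_sigma_finite_def prob_space_imp_sigma_finite prob_space_uniform_phase)
  have ins: "{..<Suc N} = insert N {..<N}" by auto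
  have upd: "phase_sum (Suc N) c (\<phi>(N := y)) = phase_sum N c \<phi> + c N * exp (\<i> * complex_of_real y)"
    for \<phi> y unfolding phase_sum_def by (auto intro!: sum.cong)
  have meas: "phase_sum (Suc N) c \<in> borel_measurable (PiM (insert N {..<N}) (\<lambda>_. uniform_phase))"
    using measurable_phase_sum[of "Suc N" c] unfolding phases_def ins .
  have add_phase: "(\<integral>\<^sup>+\<phi>. ennreal (cmod (phase_sum (Suc N) c \<phi>) ^ k) \<partial>phases (Suc N))
      = (\<integral>\<^sup>+\<phi>. \<integral>\<^sup>+y. ennreal (cmod (phase_sum N c \<phi> + c N * exp (\<i> * complex_of_real y)) ^ k)
           \<partial>uniform_phase \<partial>phases N)" for k
    unfolding phases_def ins upd[symmetric]
    by (rule product_nn_integral_insert) (use meas in auto)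
  interpret phases: prob_space "phases N" by (rule prob_space_phases)
  have "(\<integral>\<^sup>+\<phi>. ennreal (cmod (phase_sum (Suc N) c \<phi>) ^ 2) \<partial>phases (Suc N))
      = (\<integral>\<^sup>+\<phi>. ennreal (cmod (phase_sum N c \<phi>) ^ 2) + 1 \<partial>phases N)"
    unfolding add_phase nn_integral_uniform_phase_shift(2)[OF c] by simp
  also have "\<dots> = ennreal (real (Suc N))"
    using Suc.IH by (simp add: nn_integral_add phases.emeasure_space_1 ennreal_plus[symmetric])
  moreover have "(\<integral>\<^sup>+\<phi>. ennreal (cmod (phase_sum (Suc N) c \<phi>) ^ 4) \<partial>phases (Suc N))
      = (\<integral>\<^sup>+\<phi>. ennreal (cmod (phase_sum N c \<phi>) ^ 4 + 4 * cmod (phase_sum N c \<phi>) ^ 2 + 1) \<partial>phases N)"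
    unfolding add_phase nn_integral_uniform_phase_shift(1)[OF c] ..
  moreover have "\<dots> = ennreal (2 * real (Suc N) ^ 2 - real (Suc N))"
    using Suc.IH real_le_two_power2[of N]
    by (subst nn_integral_affine_combination[OF prob_space_phases]) (auto simp: power2_eq_square algebra_simps)
  ultimately show ?case by simp
qed

section \<open>Haar measure on U(m)\<close>

definition monomial4 :: "cmat \<Rightarrow> nat \<Rightarrow> nat \<Rightarrow> nat \<Rightarrow> nat \<Rightarrow> nat \<Rightarrow> nat \<Rightarrow> nat \<Rightarrow> nat \<Rightarrow> complex" where
  "monomial4 V a1 c1 a2 c2 a3 c3 a4 c4 = V a1 c1 * V a2 c2 * cnj (V a3 c3) * cnj (V a4 c4)"

definition monomial2 :: "cmat \<Rightarrow> nat \<Rightarrow> nat \<Rightarrow> nat \<Rightarrow> nat \<Rightarrow> complex" where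
  "monomial2 V a1 c1 a3 c3 = V a1 c1 * cnj (V a3 c3)"

definition row_count :: "nat \<Rightarrow> nat \<Rightarrow> nat \<Rightarrow> nat" where
  "row_count r x y = (if x = r then 1 else 0) + (if y = r then 1 else 0)"

lemma measurable_monomial4 [measurable]:
  "(\<lambda>V. monomial4 V a1 c1 a2 c2 a3 c3 a4 c4) \<in> borel_measurable matspace"
  unfolding monomial4_def by measurable

lemma measurable_monomial2 [measurable]: "(\<lambda>V. monomial2 V a1 c1 a3 c3) \<in> borel_measurable matspace"
  unfolding monomial2_def by measurable

lemma row_counts_eq_imp_same_pair:
  assumes "row_count i i j = row_count i k l" "row_count j i j = row_count j k l"
    "row_count k i j = row_count k k l"
  shows "(k = i \<and> l = j) \<or> (k = j \<and> l = i)"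
  using assms unfolding row_count_def by (cases "k = i"; cases "l = j"; cases "k = j"; cases "l = i"; simp)

lemma mtrace_norm_sq_expand:
  "mtrace m V * cnj (mtrace m V) = (\<Sum>i<m. \<Sum>k<m. monomial2 V i i k k)"
  by (simp add: mtrace_def sum_product monomial2_def)

lemma mtrace_norm_pow4_expand:
  "(mtrace m V * cnj (mtrace m V)) ^ 2 = (\<Sum>i<m. \<Sum>j<m. \<Sum>k<m. \<Sum>l<m. monomial4 V i i j j k k l l)"
proof -
  have "(mtrace m V * cnj (mtrace m V)) ^ 2
      = (mtrace m V * mtrace m V) * (cnj (mtrace m V) * cnj (mtrace m V))"
    by (simp add: power2_eq_square mult_ac)
  also have "\<dots> = (\<Sum>i<m. \<Sum>j<m. V i i * V j j) * (\<Sum>k<m. \<Sum>l<m. cnj (V k k) * cnj (V l l))"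
    by (simp add: mtrace_def sum_product)
  also have "\<dots> = (\<Sum>i<m. \<Sum>j<m. \<Sum>k<m. \<Sum>l<m. (V i i * V j j) * (cnj (V k k) * cnj (V l l)))"
    by (simp only: sum_distrib_right) (simp only: sum_distrib_left)
  finally show ?thesis by (simp add: monomial4_def mult_ac)
qed

locale haar_unitary_measure =
  fixes m :: nat and H :: "cmat measure"
  assumes haar: "haar_unitary m H"
begin

sublocale prob_space H
  using haar by (simp add: haar_unitary_def)

lemma sets_H: "sets H = sets matspace"
  using haar by (simp add: haar_unitary_def)

lemma AE_unitary: "AE V in H. unitary_mat m V"
  using haar by (simp add: haar_unitary_def)

lemma measurable_H: "f \<in> measurable matspace N \<Longrightarrow> f \<in> measurable H N"
  using measurable_cong_sets[OF sets_H refl, of N] by blast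

lemma distr_mmult_unitary: "unitary_mat m W \<Longrightarrow> distr H matspace (mmult m W) = H"
  using haar by (simp add: haar_unitary_def)

lemma integral_mmult_unitary:
  fixes f :: "cmat \<Rightarrow> complex"
  assumes "unitary_mat m W" "f \<in> borel_measurable matspace"
  shows "integral\<^sup>L H (\<lambda>V. f (mmult m W V)) = integral\<^sup>L H f"
  using integral_distr[OF measurable_H[OF measurable_mmult[of m W]] assms(2)]
  by (simp add: distr_mmult_unitary[OF assms(1)])

lemma nn_integral_mmult_unitary:
  assumes "unitary_mat m W" "f \<in> borel_measurable matspace"
  shows "(\<integral>\<^sup>+V. f (mmult m W V) \<partial>H) = integral\<^sup>N H f"
proof -
  have "(\<integral>\<^sup>+V. f (mmult m W V) \<partial>H) = integral\<^sup>N (distr H matspace (mmult m W)) f"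
    by (rule nn_integral_distr[OF measurable_H[OF measurable_mmult], symmetric])
      (simp add: distr_mmult_unitary[OF assms(1)] measurable_H[OF assms(2)])
  then show ?thesis by (simp add: distr_mmult_unitary[OF assms(1)])
qed

lemma integrable_bounded_on_unitary:
  fixes f :: "cmat \<Rightarrow> complex"
  assumes "f \<in> borel_measurable matspace" "\<And>V. unitary_mat m V \<Longrightarrow> cmod (f V) \<le> B"
  shows "integrable H f"
  using AE_unitary assms
  by (intro integrable_const_bound[where B=B] measurable_H) auto

lemma integral_eq_on_unitary:
  fixes f :: "cmat \<Rightarrow> complex"
  assumes "f \<in> borel_measurable matspace" "\<And>V. unitary_mat m V \<Longrightarrow> f V = k"
  shows "integral\<^sup>L H f = k"
proof -
  have "integral\<^sup>L H f = integral\<^sup>L H (\<lambda>_. k)"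
    using AE_unitary assms by (intro integral_cong_AE measurable_H) auto
  then show ?thesis by (simp add: prob_space)
qed

lemma integral_eq_0_of_twist:
  fixes f :: "cmat \<Rightarrow> complex"
  assumes "unitary_mat m W" "f \<in> borel_measurable matspace"
    and twist: "\<And>V. f (mmult m W V) = z * f V" and "z \<noteq> 1"
  shows "integral\<^sup>L H f = 0"
proof -
  have "integral\<^sup>L H f = z * integral\<^sup>L H f"
    using integral_mmult_unitary[OF assms(1,2)] by (simp add: twist)
  then show ?thesis using \<open>z \<noteq> 1\<close> by (metis mult_cancel_right1)
qed

lemma integral_permute_rows:
  fixes f :: "cmat \<Rightarrow> complex"
  assumes \<sigma>: "bij_betw \<sigma> {..<m} {..<m}" and f: "f \<in> borel_measurable matspace"
  shows "integral\<^sup>L H (\<lambda>V. f (\<lambda>i j. if i < m \<and> j < m then V (\<sigma> i) j else 0)) = integral\<^sup>L H f"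
proof -
  have "\<And>i. i < m \<Longrightarrow> \<sigma> i < m" using \<sigma> by (auto simp: bij_betw_def)
  then show ?thesis
    using integral_mmult_unitary[OF unitary_perm_mat[OF \<sigma>] f] by (simp add: mmult_perm_mat)
qed

lemma integral_mtrace: "integral\<^sup>L H (mtrace m) = 0"
  by (rule integral_eq_0_of_twist[OF unitary_diag_mat[of m "\<lambda>_. \<i>"] measurable_mtrace, where z=\<i>])
    (simp_all add: mtrace_mmult_diag_mat_const)

lemma integral_mtrace_square: "integral\<^sup>L H (\<lambda>V. mtrace m V ^ 2) = 0"
  by (rule integral_eq_0_of_twist[OF unitary_diag_mat[of m "\<lambda>_. \<i>"], where z="-1"])
    (simp_all add: mtrace_mmult_diag_mat_const power_mult_distrib)

lemma integral_mtrace_cubic: "integral\<^sup>L H (\<lambda>V. mtrace m V * cnj (mtrace m V) * mtrace m V) = 0"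
  by (rule integral_eq_0_of_twist[OF unitary_diag_mat[of m "\<lambda>_. \<i>"], where z=\<i>])
    (simp_all add: mtrace_mmult_diag_mat_const algebra_simps)

lemma integrable_monomial4: "integrable H (\<lambda>V. monomial4 V a1 c1 a2 c2 a3 c3 a4 c4)"
  by (rule integrable_bounded_on_unitary[where B=1])
    (auto simp: monomial4_def norm_mult intro!: mult_le_one unitary_entry_bound)

lemma integrable_monomial2: "integrable H (\<lambda>V. monomial2 V a1 c1 a3 c3)"
  by (rule integrable_bounded_on_unitary[where B=1])
    (auto simp: monomial2_def norm_mult intro!: mult_le_one unitary_entry_bound)

text \<open>Multiplying row r by i multiplies the monomial by i^k (cnj i)^l, where k and l count the
  occurrences of r among the unconjugated and the conjugated row indices.\<close>

lemma integral_monomial4_row_count: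
  assumes "a1 < m" "a2 < m" "a3 < m" "a4 < m" "c1 < m" "c2 < m" "c3 < m" "c4 < m"
    and "row_count r a1 a2 \<noteq> row_count r a3 a4"
  shows "integral\<^sup>L H (\<lambda>V. monomial4 V a1 c1 a2 c2 a3 c3 a4 c4) = 0"
proof (rule integral_eq_0_of_twist[OF unitary_diag_mat measurable_monomial4])
  let ?z = "\<lambda>i. if i = r then \<i> else 1"
  show "cmod (?z i) = 1" for i by simp
  have z12: "?z a1 * ?z a2 = \<i> ^ row_count r a1 a2" and z34: "?z a3 * ?z a4 = \<i> ^ row_count r a3 a4"
    by (auto simp: row_count_def)
  fix V
  have "monomial4 (mmult m (diag_mat m ?z) V) a1 c1 a2 c2 a3 c3 a4 c4
      = (?z a1 * ?z a2) * cnj (?z a3 * ?z a4) * monomial4 V a1 c1 a2 c2 a3 c3 a4 c4"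
    using assms by (simp add: monomial4_def mmult_diag_mat ac_simps)
  then show "monomial4 (mmult m (diag_mat m ?z) V) a1 c1 a2 c2 a3 c3 a4 c4
      = \<i> ^ row_count r a1 a2 * cnj (\<i> ^ row_count r a3 a4) * monomial4 V a1 c1 a2 c2 a3 c3 a4 c4"
    by (simp only: z12 z34)
  have "row_count r a1 a2 \<le> 2" "row_count r a3 a4 \<le> 2" by (simp_all add: row_count_def)
  then show "\<i> ^ row_count r a1 a2 * cnj (\<i> ^ row_count r a3 a4) \<noteq> 1"
    using assms(9) by (auto simp: le_Suc_eq numeral_2_eq_2 complex_eq_iff)
qed

lemma integral_monomial2_offdiag:
  assumes "a1 < m" "a3 < m" "c1 < m" "c3 < m" "a1 \<noteq> a3"
  shows "integral\<^sup>L H (\<lambda>V. monomial2 V a1 c1 a3 c3) = 0"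
proof (rule integral_eq_0_of_twist[OF unitary_diag_mat measurable_monomial2, where z=\<i>])
  let ?z = "\<lambda>i. if i = a1 then \<i> else 1"
  show "cmod (?z i) = 1" for i by simp
  show "monomial2 (mmult m (diag_mat m ?z) V) a1 c1 a3 c3 = \<i> * monomial2 V a1 c1 a3 c3" for V
    using assms by (simp add: monomial2_def mmult_diag_mat)
qed simp

lemma integral_monomial4_permute_rows:
  assumes "bij_betw \<sigma> {..<m} {..<m}"
    and "a1 < m" "a2 < m" "a3 < m" "a4 < m" "c1 < m" "c2 < m" "c3 < m" "c4 < m"
  shows "integral\<^sup>L H (\<lambda>V. monomial4 V (\<sigma> a1) c1 (\<sigma> a2) c2 (\<sigma> a3) c3 (\<sigma> a4) c4)
       = integral\<^sup>L H (\<lambda>V. monomial4 V a1 c1 a2 c2 a3 c3 a4 c4)"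
  using integral_permute_rows[OF assms(1) measurable_monomial4, of a1 c1 a2 c2 a3 c3 a4 c4] assms
  by (simp add: monomial4_def)

lemma integral_monomial2_diag:
  assumes "a < m" "c < m"
  shows "integral\<^sup>L H (\<lambda>V. monomial2 V a c a c) = 1 / of_nat m"
proof -
  have same: "integral\<^sup>L H (\<lambda>V. monomial2 V b c b c) = integral\<^sup>L H (\<lambda>V. monomial2 V 0 c 0 c)"
    if "b < m" for b
    using integral_permute_rows[OF bij_betw_transpose_iff[of 0 "{..<m}" b]
        measurable_monomial2, of 0 c 0 c] that assms
    by (simp add: monomial2_def)
  have "1 = integral\<^sup>L H (\<lambda>V. \<Sum>b<m. monomial2 V b c b c)"
  proof (rule integral_eq_on_unitary[symmetric])
    show "(\<lambda>V. \<Sum>b<m. monomial2 V b c b c) \<in> borel_measurable matspace" by measurable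
  qed (use unitary_column_norm assms in \<open>auto simp: monomial2_def\<close>)
  also have "\<dots> = (\<Sum>b<m. integral\<^sup>L H (\<lambda>V. monomial2 V b c b c))"
    by (rule Bochner_Integration.integral_sum) (rule integrable_monomial2)
  also have "\<dots> = (\<Sum>b<m. integral\<^sup>L H (\<lambda>V. monomial2 V 0 c 0 c))"
    by (intro sum.cong refl same) simp
  also have "\<dots> = of_nat m * integral\<^sup>L H (\<lambda>V. monomial2 V 0 c 0 c)"
    by simp
  finally have "of_nat m * integral\<^sup>L H (\<lambda>V. monomial2 V 0 c 0 c) = 1" ..
  then show ?thesis
    using assms same[OF assms(1)] by (simp add: eq_divide_eq ac_simps)
qed

lemma integral_monomial4_rows_normalize:
  assumes "a < m" "b < m" "c < m" "c' < m"
  shows "integral\<^sup>L H (\<lambda>V. monomial4 V a c b c' a c b c') =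
    (if a = b then integral\<^sup>L H (\<lambda>V. monomial4 V 0 c 0 c' 0 c 0 c')
     else integral\<^sup>L H (\<lambda>V. monomial4 V 0 c 1 c' 0 c 1 c'))"
proof (cases "a = b")
  case True
  have "bij_betw (Transposition.transpose 0 a) {..<m} {..<m}" using assms by simp
  from integral_monomial4_permute_rows[OF this, of 0 0 0 0 c c' c c'] assms True show ?thesis
    by simp
next
  case False
  obtain \<sigma> where "bij_betw \<sigma> {..<m} {..<m}" "\<sigma> 0 = a" "\<sigma> 1 = b"
    using obtain_perm_pair[OF assms(1,2) False] by blast
  from integral_monomial4_permute_rows[OF this(1), of 0 1 0 1 c c' c c'] this assms False
  show ?thesis by simp
qed

lemma integral_monomial4_rows_exchange:
  assumes "a < m" "b < m" "a \<noteq> b" "c < m" "c' < m"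
  shows "integral\<^sup>L H (\<lambda>V. monomial4 V a c b c' b c a c') = integral\<^sup>L H (\<lambda>V. monomial4 V 0 c 1 c' 1 c 0 c')"
proof -
  obtain \<sigma> where "bij_betw \<sigma> {..<m} {..<m}" "\<sigma> 0 = a" "\<sigma> 1 = b"
    using obtain_perm_pair[OF assms(1-3)] by blast
  from integral_monomial4_permute_rows[OF this(1), of 0 1 1 0 c c' c c'] this assms
  show ?thesis by simp
qed

lemma column_norm_relation:
  assumes "c < m" "c' < m"
  shows "of_nat m * integral\<^sup>L H (\<lambda>V. monomial4 V 0 c 0 c' 0 c 0 c')
     + of_nat m * (of_nat m - 1) * integral\<^sup>L H (\<lambda>V. monomial4 V 0 c 1 c' 0 c 1 c') = 1"
proof -
  have "1 = integral\<^sup>L H (\<lambda>V. \<Sum>a<m. \<Sum>b<m. monomial4 V a c b c' a c b c')"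
  proof (rule integral_eq_on_unitary[symmetric])
    show "(\<lambda>V. \<Sum>a<m. \<Sum>b<m. monomial4 V a c b c' a c b c') \<in> borel_measurable matspace"
      by measurable
    fix V assume V: "unitary_mat m V"
    have "(\<Sum>a<m. \<Sum>b<m. monomial4 V a c b c' a c b c')
        = (\<Sum>a<m. \<Sum>b<m. (V a c * cnj (V a c)) * (V b c' * cnj (V b c')))"
      by (intro sum.cong refl) (simp add: monomial4_def mult_ac)
    also have "\<dots> = (\<Sum>a<m. V a c * cnj (V a c)) * (\<Sum>b<m. V b c' * cnj (V b c'))"
      by (simp only: sum_product)
    finally show "(\<Sum>a<m. \<Sum>b<m. monomial4 V a c b c' a c b c') = 1"
      using unitary_column_norm[OF V] assms by simp
  qed
  also have "\<dots> = (\<Sum>a<m. \<Sum>b<m. integral\<^sup>L H (\<lambda>V. monomial4 V a c b c' a c b c'))"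
    by (simp add: integrable_monomial4)
  also have "\<dots> = (\<Sum>a<m. \<Sum>b<m. if a = b then integral\<^sup>L H (\<lambda>V. monomial4 V 0 c 0 c' 0 c 0 c')
      else integral\<^sup>L H (\<lambda>V. monomial4 V 0 c 1 c' 0 c 1 c'))"
    using assms by (intro sum.cong refl integral_monomial4_rows_normalize) auto
  finally show ?thesis by (simp only: double_sum_diag_offdiag)
qed

lemma column_orth_relation:
  assumes "c < m" "c' < m" "c \<noteq> c'"
  shows "of_nat m * integral\<^sup>L H (\<lambda>V. monomial4 V 0 c 0 c' 0 c 0 c')
     + of_nat m * (of_nat m - 1) * integral\<^sup>L H (\<lambda>V. monomial4 V 0 c 1 c' 1 c 0 c') = 0"
proof -
  have "0 = integral\<^sup>L H (\<lambda>V. \<Sum>a<m. \<Sum>b<m. monomial4 V b c a c' a c b c')"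
  proof (rule integral_eq_on_unitary[symmetric])
    show "(\<lambda>V. \<Sum>a<m. \<Sum>b<m. monomial4 V b c a c' a c b c') \<in> borel_measurable matspace"
      by measurable
    fix V assume V: "unitary_mat m V"
    have "(\<Sum>a<m. \<Sum>b<m. monomial4 V b c a c' a c b c')
        = (\<Sum>a<m. \<Sum>b<m. (cnj (V a c) * V a c') * (V b c * cnj (V b c')))"
      by (intro sum.cong refl) (simp add: monomial4_def mult_ac)
    also have "\<dots> = (\<Sum>a<m. cnj (V a c) * V a c') * (\<Sum>b<m. V b c * cnj (V b c'))"
      by (simp only: sum_product)
    finally show "(\<Sum>a<m. \<Sum>b<m. monomial4 V b c a c' a c b c') = 0"
      using unitary_column_orth[OF V assms] by simp
  qed
  also have "\<dots> = (\<Sum>a<m. \<Sum>b<m. integral\<^sup>L H (\<lambda>V. monomial4 V b c a c' a c b c'))"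
    by (simp add: integrable_monomial4)
  also have "\<dots> = (\<Sum>a<m. \<Sum>b<m. if a = b then integral\<^sup>L H (\<lambda>V. monomial4 V 0 c 0 c' 0 c 0 c')
      else integral\<^sup>L H (\<lambda>V. monomial4 V 0 c 1 c' 1 c 0 c'))"
  proof (intro sum.cong refl)
    fix a b assume "a \<in> {..<m}" "b \<in> {..<m}"
    then show "integral\<^sup>L H (\<lambda>V. monomial4 V b c a c' a c b c')
      = (if a = b then integral\<^sup>L H (\<lambda>V. monomial4 V 0 c 0 c' 0 c 0 c')
         else integral\<^sup>L H (\<lambda>V. monomial4 V 0 c 1 c' 1 c 0 c'))"
      using assms integral_monomial4_rows_normalize[of a a c c'] integral_monomial4_rows_exchange[of b a c c']
      by auto
  qed
  finally show ?thesis by (simp only: double_sum_diag_offdiag)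
qed

lemma integral_monomial4_hadamard:
  assumes "2 \<le> m" "c1 < m" "c2 < m" "c3 < m" "c4 < m"
  shows "integral\<^sup>L H (\<lambda>V. monomial4 V 0 c1 0 c2 0 c3 0 c4) = 1/4 *
    (\<Sum>x<2. \<Sum>y<2. \<Sum>z<2. \<Sum>w<2. integral\<^sup>L H (\<lambda>V. monomial4 V x c1 y c2 z c3 w c4))"
proof -
  have quarter: "(inv_sqrt2 * inv_sqrt2) * (inv_sqrt2 * inv_sqrt2) = 1/4"
    by (simp add: inv_sqrt2_sq)
  have rotate: "monomial4 (mmult m (hadamard_mat m) V) 0 c1 0 c2 0 c3 0 c4
      = 1/4 * (\<Sum>x<2. \<Sum>y<2. \<Sum>z<2. \<Sum>w<2. monomial4 V x c1 y c2 z c3 w c4)" for V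
  proof -
    have "monomial4 (mmult m (hadamard_mat m) V) 0 c1 0 c2 0 c3 0 c4
      = (inv_sqrt2 * inv_sqrt2) * (inv_sqrt2 * inv_sqrt2) * ((V 0 c1 + V 1 c1) * (V 0 c2 + V 1 c2)
          * (cnj (V 0 c3) + cnj (V 1 c3)) * (cnj (V 0 c4) + cnj (V 1 c4)))"
      using assms by (simp add: monomial4_def mmult_hadamard_mat_row0 mult_ac)
    also have "(V 0 c1 + V 1 c1) * (V 0 c2 + V 1 c2) * (cnj (V 0 c3) + cnj (V 1 c3)) * (cnj (V 0 c4) + cnj (V 1 c4))
      = (\<Sum>x<2. \<Sum>y<2. \<Sum>z<2. \<Sum>w<2. monomial4 V x c1 y c2 z c3 w c4)"
      by (simp only: sum_lessThan_2) (simp add: monomial4_def algebra_simps)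
    finally show ?thesis by (simp only: quarter)
  qed
  have "integral\<^sup>L H (\<lambda>V. monomial4 V 0 c1 0 c2 0 c3 0 c4)
      = integral\<^sup>L H (\<lambda>V. monomial4 (mmult m (hadamard_mat m) V) 0 c1 0 c2 0 c3 0 c4)"
    by (rule integral_mmult_unitary[OF unitary_hadamard_mat[OF assms(1)] measurable_monomial4, symmetric])
  also have "\<dots> = integral\<^sup>L H
      (\<lambda>V. 1/4 * (\<Sum>x<2. \<Sum>y<2. \<Sum>z<2. \<Sum>w<2. monomial4 V x c1 y c2 z c3 w c4))"
    by (simp only: rotate)
  finally show ?thesis
    by (simp only: integral_mult_right_zero Bochner_Integration.integral_sum
        Bochner_Integration.integrable_sum integrable_monomial4)
qed

lemma integral_monomial4_single_entry:
  assumes m: "2 \<le> m" and c: "c < m"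
  shows "integral\<^sup>L H (\<lambda>V. monomial4 V 0 c 0 c 0 c 0 c) = 2 / (of_nat m * (of_nat m + 1))"
proof -
  let ?A = "integral\<^sup>L H (\<lambda>V. monomial4 V 0 c 0 c 0 c 0 c)"
  let ?B = "integral\<^sup>L H (\<lambda>V. monomial4 V 0 c 1 c 0 c 1 c)"
  have vanish: "integral\<^sup>L H (\<lambda>V. monomial4 V x c y c z c w c) = 0"
    if "x < 2" "y < 2" "z < 2" "w < 2" "row_count 0 x y \<noteq> row_count 0 z w" for x y z w
    using that m c by (intro integral_monomial4_row_count) auto
  have "integral\<^sup>L H (\<lambda>V. monomial4 V 0 c 1 c 1 c 0 c) = ?B"
    "integral\<^sup>L H (\<lambda>V. monomial4 V 1 c 0 c 0 c 1 c) = ?B"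
    "integral\<^sup>L H (\<lambda>V. monomial4 V 1 c 0 c 1 c 0 c) = ?B"
    by (simp_all add: monomial4_def mult_ac)
  moreover have "integral\<^sup>L H (\<lambda>V. monomial4 V 1 c 1 c 1 c 1 c) = ?A"
    using integral_monomial4_permute_rows[of "Transposition.transpose 0 1" 0 0 0 0 c c c c] m c
    by simp
  ultimately have "?A = 1/4 * (?A + ?B + ?B + ?B + ?B + ?A)"
    by (intro trans[OF integral_monomial4_hadamard[OF m c c c c]]) (simp add: sum_lessThan_2 vanish row_count_def)
  then have A: "?A = 2 * ?B" by (simp add: field_simps)
  have "of_nat m * ?A + of_nat m * (of_nat m - 1) * ?B = 1"
    by (rule column_norm_relation[OF c c])
  then have "?B * (of_nat m * (of_nat m + 1)) = 1" unfolding A by (simp add: algebra_simps)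
  moreover have "(of_nat m + 1 :: complex) \<noteq> 0"
    by (rule of_nat_add_one_neq_zero)
  then have "(of_nat m :: complex) * (of_nat m + 1) \<noteq> 0"
    using m by simp
  ultimately show ?thesis unfolding A by (simp add: field_simps)
qed

lemma integral_monomial4_two_rows:
  assumes m: "2 \<le> m" and c: "c < m" "c' < m" "c \<noteq> c'"
  shows "integral\<^sup>L H (\<lambda>V. monomial4 V 0 c 1 c' 0 c 1 c') = 1 / ((of_nat m + 1) * (of_nat m - 1))"
proof -
  let ?F = "integral\<^sup>L H (\<lambda>V. monomial4 V 0 c 0 c' 0 c 0 c')"
  let ?P = "integral\<^sup>L H (\<lambda>V. monomial4 V 0 c 1 c' 0 c 1 c')"
  let ?G = "integral\<^sup>L H (\<lambda>V. monomial4 V 0 c 1 c' 1 c 0 c')"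
  have vanish: "integral\<^sup>L H (\<lambda>V. monomial4 V x c y c' z c w c') = 0"
    if "x < 2" "y < 2" "z < 2" "w < 2" "row_count 0 x y \<noteq> row_count 0 z w" for x y z w
    using that m c by (intro integral_monomial4_row_count) auto
  have "bij_betw (Transposition.transpose 0 1) {..<m} {..<m}" using m by simp
  note swap = integral_monomial4_permute_rows[OF this]
  have "integral\<^sup>L H (\<lambda>V. monomial4 V 1 c 0 c' 0 c 1 c') = ?G"
    "integral\<^sup>L H (\<lambda>V. monomial4 V 1 c 0 c' 1 c 0 c') = ?P"
    "integral\<^sup>L H (\<lambda>V. monomial4 V 1 c 1 c' 1 c 1 c') = ?F"
    using swap[of 0 1 1 0 c c' c c'] swap[of 0 1 0 1 c c' c c'] swap[of 0 0 0 0 c c' c c'] m c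
    by simp_all
  then have "?F = 1/4 * (?F + ?P + ?G + ?G + ?P + ?F)"
    by (intro trans[OF integral_monomial4_hadamard[OF m c(1,2,1,2)]])
      (simp add: sum_lessThan_2 vanish row_count_def)
  then have "2 * ?F = 2 * (?P + ?G)" by (simp add: field_simps)
  then have "?F = ?P + ?G" by (simp only: mult_cancel_left) simp
  then have G: "?G = ?F - ?P" by simp
  have norm: "of_nat m * ?F + of_nat m * (of_nat m - 1) * ?P = 1"
    by (rule column_norm_relation[OF c(1,2)])
  have "of_nat m * ?F + of_nat m * (of_nat m - 1) * ?G = 0"
    by (rule column_orth_relation[OF c])
  then have "of_nat m * (of_nat m * ?F - (of_nat m - 1) * ?P) = 0"
    unfolding G by (simp add: algebra_simps)
  then have "of_nat m * ?F = (of_nat m - 1) * ?P" using m by simp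
  then have "(of_nat m - 1) * ?P + of_nat m * (of_nat m - 1) * ?P = 1"
    using norm by simp
  then have "?P * ((of_nat m + 1) * (of_nat m - 1)) = 1"
    by (simp add: algebra_simps)
  moreover have "(of_nat m + 1 :: complex) \<noteq> 0"
    by (rule of_nat_add_one_neq_zero)
  then have "(of_nat m + 1 :: complex) * (of_nat m - 1) \<noteq> 0"
    using m by simp
  ultimately show ?thesis by (simp add: field_simps)
qed

lemma integral_monomial4_trace_diag:
  assumes m: "2 \<le> m" and "i < m" "j < m"
  shows "integral\<^sup>L H (\<lambda>V. monomial4 V i i j j i i j j)
    = (if i = j then 2 / (of_nat m * (of_nat m + 1)) else 1 / ((of_nat m + 1) * (of_nat m - 1)))"
proof (cases "i = j")
  case True
  then show ?thesis
    using assms integral_monomial4_rows_normalize[of i i i i] integral_monomial4_single_entry[OF m, of i]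
    by simp
next
  case False
  then show ?thesis
    using assms integral_monomial4_rows_normalize[of i j i j] integral_monomial4_two_rows[OF m, of i j]
    by simp
qed

lemma integral_monomial4_trace_offdiag:
  assumes "i < m" "j < m" "k < m" "l < m" "\<not> ((k = i \<and> l = j) \<or> (k = j \<and> l = i))"
  shows "integral\<^sup>L H (\<lambda>V. monomial4 V i i j j k k l l) = 0"
proof -
  have "row_count i i j \<noteq> row_count i k l \<or> row_count j i j \<noteq> row_count j k l
      \<or> row_count k i j \<noteq> row_count k k l"
    using row_counts_eq_imp_same_pair assms(5) by blast
  then show ?thesis
    using assms(1-4) by (elim disjE) (rule integral_monomial4_row_count; simp)+
qed

lemma integral_mtrace_norm_sq:
  assumes "1 \<le> m"
  shows "integral\<^sup>L H (\<lambda>V. mtrace m V * cnj (mtrace m V)) = 1"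
proof -
  have "integral\<^sup>L H (\<lambda>V. mtrace m V * cnj (mtrace m V))
      = (\<Sum>i<m. \<Sum>k<m. integral\<^sup>L H (\<lambda>V. monomial2 V i i k k))"
    by (simp add: mtrace_norm_sq_expand integrable_monomial2)
  also have "\<dots> = (\<Sum>i<m. \<Sum>k<m. if i = k then 1 / of_nat m else 0)"
    by (intro sum.cong refl)
      (auto simp: integral_monomial2_diag integral_monomial2_offdiag)
  also have "\<dots> = 1" using assms by simp
  finally show ?thesis .
qed

lemma integral_mtrace_norm_pow4:
  assumes m: "2 \<le> m"
  shows "integral\<^sup>L H (\<lambda>V. (mtrace m V * cnj (mtrace m V)) ^ 2) = 2"
proof -
  define M :: complex where "M = of_nat m"
  define A where "A = 2 / (M * (M + 1))"
  define C where "C = 1 / ((M + 1) * (M - 1))"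
  have "integral\<^sup>L H (\<lambda>V. (mtrace m V * cnj (mtrace m V)) ^ 2)
      = (\<Sum>i<m. \<Sum>j<m. \<Sum>k<m. \<Sum>l<m. integral\<^sup>L H (\<lambda>V. monomial4 V i i j j k k l l))"
    by (simp add: mtrace_norm_pow4_expand integrable_monomial4)
  also have "\<dots> = (\<Sum>i<m. \<Sum>j<m. if i = j then A else 2 * C)"
  proof (intro sum.cong refl)
    fix i j assume ij: "i \<in> {..<m}" "j \<in> {..<m}"
    let ?X = "integral\<^sup>L H (\<lambda>V. monomial4 V i i j j i i j j)"
    have "integral\<^sup>L H (\<lambda>V. monomial4 V i i j j k k l l)
        = (if (k = i \<and> l = j) \<or> (k = j \<and> l = i) then ?X else 0)" if "k < m" "l < m" for k l
      using ij that integral_monomial4_trace_offdiag[of i j k l]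
      by (auto simp: monomial4_def mult_ac)
    then have "(\<Sum>k<m. \<Sum>l<m. integral\<^sup>L H (\<lambda>V. monomial4 V i i j j k k l l))
        = (\<Sum>k<m. \<Sum>l<m. if (k = i \<and> l = j) \<or> (k = j \<and> l = i) then ?X else 0)"
      by (intro sum.cong refl) auto
    also have "\<dots> = (if i = j then ?X else 2 * ?X)"
      using ij by (simp add: double_sum_pair)
    also have "\<dots> = (if i = j then A else 2 * C)"
      using ij integral_monomial4_trace_diag[OF m, of i j]
      by (cases "i = j") (simp_all add: A_def C_def M_def)
    finally show "(\<Sum>k<m. \<Sum>l<m. integral\<^sup>L H (\<lambda>V. monomial4 V i i j j k k l l))
        = (if i = j then A else 2 * C)" .
  qed
  also have "\<dots> = M * A + M * (M - 1) * (2 * C)"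
    unfolding M_def by (rule double_sum_diag_offdiag)
  also have "\<dots> = 2"
  proof -
    have nz: "M + 1 \<noteq> 0" "M \<noteq> 0" "M - 1 \<noteq> 0"
      unfolding M_def using m of_nat_add_one_neq_zero by auto
    have "M * A = 2 / (M + 1)" "M * (M - 1) * (2 * C) = 2 * M / (M + 1)"
      unfolding A_def C_def using nz by simp_all
    moreover have "2 / (M + 1) + 2 * M / (M + 1) = 2"
      using nz by (simp add: add_divide_distrib[symmetric] divide_eq_eq algebra_simps)
    ultimately show ?thesis by simp
  qed
  finally show ?thesis .
qed

lemma expectation_mtrace_norm_pow2: "expectation (\<lambda>V. cmod (mtrace m V) ^ 2) = real (min 1 m)"
proof -
  have "complex_of_real (expectation (\<lambda>V. cmod (mtrace m V) ^ 2))
      = expectation (\<lambda>V. mtrace m V * cnj (mtrace m V))"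
    by (simp only: integral_complex_of_real[symmetric] complex_norm_square)
  also have "\<dots> = complex_of_real (real (min 1 m))"
  proof (cases "m = 0")
    case True
    then show ?thesis by (simp add: mtrace_def)
  next
    case False
    then show ?thesis by (simp add: integral_mtrace_norm_sq)
  qed
  finally show ?thesis by (simp only: of_real_eq_iff)
qed

lemma expectation_mtrace_norm_pow4: "expectation (\<lambda>V. cmod (mtrace m V) ^ 4) = real (min 2 m)"
proof -
  have "complex_of_real (expectation (\<lambda>V. cmod (mtrace m V) ^ 4))
      = expectation (\<lambda>V. (mtrace m V * cnj (mtrace m V)) ^ 2)"
    by (simp only: integral_complex_of_real[symmetric] complex_norm_pow4)
  also have "\<dots> = complex_of_real (real (min 2 m))"
  proof -
    consider "m = 0" | "m = 1" | "2 \<le> m" by linarith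
    then show ?thesis
    proof cases
      case 1
      then show ?thesis by (simp add: mtrace_def)
    next
      case 2
      have "expectation (\<lambda>V. (mtrace m V * cnj (mtrace m V)) ^ 2) = 1"
      proof (rule integral_eq_on_unitary)
        fix V assume "unitary_mat m V"
        then show "(mtrace m V * cnj (mtrace m V)) ^ 2 = 1"
          using unitary_column_norm[of m V 0] 2 by (simp add: mtrace_def)
      qed measurable
      then show ?thesis using 2 by simp
    next
      case 3
      then show ?thesis by (simp add: integral_mtrace_norm_pow4)
    qed
  qed
  finally show ?thesis by (simp only: of_real_eq_iff)
qed

text \<open>Left invariance removes the fixed factor V; the vanishing of the odd trace moments
  (invariance under V \<mapsto> iV) then makes the shift expansion exact.\<close>

lemma nn_integral_mtrace_shift_pow4:
  assumes V: "unitary_mat m V"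
  shows "(\<integral>\<^sup>+V'. ennreal (cmod (x + mtrace m (mmult m (madj m V) V')) ^ 4) \<partial>H)
       = ennreal (cmod x ^ 4 + 4 * real (min 1 m) * cmod x ^ 2 + real (min 2 m))"
proof -
  have meas: "(\<lambda>W. ennreal (cmod (x + mtrace m W) ^ 4)) \<in> borel_measurable matspace"
    by measurable
  have bound: "AE W in H. cmod (mtrace m W) \<le> real m"
    using AE_unitary by eventually_elim (rule unitary_trace_bound)
  have "(\<integral>\<^sup>+V'. ennreal (cmod (x + mtrace m (mmult m (madj m V) V')) ^ 4) \<partial>H)
      = (\<integral>\<^sup>+V'. ennreal (cmod (x + mtrace m (mmult m (madj m V) (mmult m V V'))) ^ 4) \<partial>H)"
    using nn_integral_mmult_unitary[OF V measurable_compose[OF measurable_mmult meas]] by simp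
  also have "\<dots> = (\<integral>\<^sup>+W. ennreal (cmod (x + mtrace m W) ^ 4) \<partial>H)"
    by (simp only: mtrace_unitary_cancel[OF V])
  also have "\<dots> = ennreal (expectation (\<lambda>W. cmod (x + mtrace m W) ^ 4))"
    by (rule nn_integral_norm_shift_pow[OF measurable_H[OF measurable_mtrace] bound])
  also have "\<dots> = ennreal (cmod x ^ 4 + 4 * real (min 1 m) * cmod x ^ 2 + real (min 2 m))"
    using expectation_norm_shift_pow4[OF measurable_H[OF measurable_mtrace] bound integral_mtrace
        integral_mtrace_square integral_mtrace_cubic]
    by (simp add: expectation_mtrace_norm_pow2 expectation_mtrace_norm_pow4 mult_ac)
  finally show ?thesis .
qed

end

section \<open>The restricted Haar ensemble\<close>

lemma mtrace_blockU:
  "mtrace (N + m) (mmult (N + m) (madj (N + m) (blockU (N + m) N \<phi> V)) (blockU (N + m) N \<phi>' V'))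
     = phase_sum N (\<lambda>j. cnj (exp (\<i> * complex_of_real (\<phi> j)))) \<phi>' + mtrace m (mmult m (madj m V) V')"
proof -
  let ?B = "blockU (N + m) N \<phi> V" and ?B' = "blockU (N + m) N \<phi>' V'"
  let ?h = "\<lambda>i k. cnj (?B k i) * ?B' k i"
  have phase_block: "(\<Sum>k<N+m. ?h i k) = cnj (exp (\<i> * complex_of_real (\<phi> i))) * exp (\<i> * complex_of_real (\<phi>' i))"
    if "i < N" for i
  proof -
    have "(\<Sum>k<N. ?h i k) = (\<Sum>k<N. if k = i then cnj (exp (\<i> * complex_of_real (\<phi> i)))
        * exp (\<i> * complex_of_real (\<phi>' i)) else 0)"
      using that by (intro sum.cong) (auto simp: blockU_def)
    moreover have "(\<Sum>b<m. ?h i (N + b)) = 0" using that by (intro sum.neutral) (auto simp: blockU_def)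
    ultimately show ?thesis using that by (simp add: sum_lessThan_add)
  qed
  have unitary_block: "(\<Sum>k<N+m. ?h (N + a) k) = (\<Sum>b<m. cnj (V b a) * V' b a)" if "a < m" for a
  proof -
    have "(\<Sum>k<N. ?h (N + a) k) = 0" by (intro sum.neutral) (auto simp: blockU_def)
    moreover have "(\<Sum>b<m. ?h (N + a) (N + b)) = (\<Sum>b<m. cnj (V b a) * V' b a)"
      using that by (intro sum.cong) (auto simp: blockU_def)
    ultimately show ?thesis by (simp add: sum_lessThan_add)
  qed
  have "(\<Sum>i<N. \<Sum>k<N+m. ?h i k) = phase_sum N (\<lambda>j. cnj (exp (\<i> * complex_of_real (\<phi> j)))) \<phi>'"
    unfolding phase_sum_def by (rule sum.cong) (simp_all add: phase_block)
  moreover have "(\<Sum>a<m. \<Sum>k<N+m. ?h (N + a) k) = mtrace m (mmult m (madj m V) V')"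
    unfolding mtrace_madj_mmult by (rule sum.cong) (simp_all add: unitary_block)
  ultimately show ?thesis
    unfolding mtrace_madj_mmult[of "N + m"] sum_lessThan_add[of _ N m] by simp
qed

lemma frame_potential2_distr:
  assumes "prob_space M" and f [measurable]: "f \<in> measurable M matspace"
  shows "frame_potential2 d (distr M matspace f) = enn2real
    (\<integral>\<^sup>+x. \<integral>\<^sup>+y. ennreal (cmod (mtrace d (mmult d (madj d (f x)) (f y))) ^ 4) \<partial>M \<partial>M)"
proof -
  interpret prob_space M by fact
  let ?g = "\<lambda>p. ennreal (cmod (mtrace d (mmult d (madj d (fst p)) (snd p))) ^ 4)"
  let ?F = "\<lambda>(x, y). (f x, f y)"
  have F [measurable]: "?F \<in> measurable (M \<Otimes>\<^sub>M M) (matspace \<Otimes>\<^sub>M matspace)" by measurable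
  have [measurable]: "(\<lambda>p. mtrace d (mmult d (madj d (fst p)) (snd p)))
      \<in> borel_measurable (matspace \<Otimes>\<^sub>M matspace)"
    by (rule measurable_mtrace_madj_mmult[OF measurable_fst measurable_snd])
  then have trace [measurable]: "(\<lambda>p. cmod (mtrace d (mmult d (madj d (fst p)) (snd p))) ^ 4)
      \<in> borel_measurable (matspace \<Otimes>\<^sub>M matspace)"
    by measurable
  have "sigma_finite_measure (distr M matspace f)"
    by (rule prob_space_imp_sigma_finite[OF prob_space_distr[OF f]])
  then have "frame_potential2 d (distr M matspace f)
      = integral\<^sup>L (distr (M \<Otimes>\<^sub>M M) (matspace \<Otimes>\<^sub>M matspace) ?F)
          (\<lambda>p. cmod (mtrace d (mmult d (madj d (fst p)) (snd p))) ^ 4)"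
    unfolding frame_potential2_def by (simp add: pair_measure_distr)
  also have "\<dots> = enn2real (integral\<^sup>N (distr (M \<Otimes>\<^sub>M M) (matspace \<Otimes>\<^sub>M matspace) ?F) ?g)"
    by (intro integral_eq_nn_integral) simp_all
  also have "integral\<^sup>N (distr (M \<Otimes>\<^sub>M M) (matspace \<Otimes>\<^sub>M matspace) ?F) ?g
      = integral\<^sup>N (M \<Otimes>\<^sub>M M) (\<lambda>p. ?g (?F p))"
    by (intro nn_integral_distr F) simp
  also have "\<dots> = (\<integral>\<^sup>+x. \<integral>\<^sup>+y. ?g (?F (x, y)) \<partial>M \<partial>M)"
    by (rule nn_integral_fst[OF measurable_compose[OF measurable_compose[OF F trace] measurable_ennreal],
          symmetric])
  finally show ?thesis by simp
qed

context haar_unitary_measure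
begin

lemma measurable_blockU: "(\<lambda>(\<phi>, V). blockU d N \<phi> V) \<in> measurable (phases N \<Otimes>\<^sub>M H) matspace"
proof (rule measurable_matspaceI)
  fix i j
  have [measurable]: "(\<lambda>x. snd x a b) \<in> borel_measurable (phases N \<Otimes>\<^sub>M H)" for a b
    by (intro measurable_compose[OF measurable_snd measurable_H] measurable_matspace_entry)
  show "(\<lambda>x. (case x of (\<phi>, V) \<Rightarrow> blockU d N \<phi> V) i j) \<in> borel_measurable (phases N \<Otimes>\<^sub>M H)"
  proof (cases "i < N \<and> j < N")
    case True
    have [measurable]: "(\<lambda>x. fst x i) \<in> borel_measurable (phases N \<Otimes>\<^sub>M H)"
      by (rule measurable_compose[OF measurable_fst measurable_phases_component]) (use True in simp)
    have "(\<lambda>x. (case x of (\<phi>, V) \<Rightarrow> blockU d N \<phi> V) i j)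
        = (\<lambda>x. if i = j then exp (\<i> * complex_of_real (fst x i)) else 0)"
      using True by (auto simp: blockU_def split: prod.splits)
    then show ?thesis by simp
  next
    case False
    then have "(\<lambda>x. (case x of (\<phi>, V) \<Rightarrow> blockU d N \<phi> V) i j)
        = (\<lambda>x. if N \<le> i \<and> i < d \<and> N \<le> j \<and> j < d then snd x (i - N) (j - N) else 0)"
      by (auto simp: blockU_def split: prod.splits)
    then show ?thesis by simp
  qed
qed

lemma nn_integral_mtrace_blockU_pow4:
  assumes V: "unitary_mat m V"
  shows "(\<integral>\<^sup>+y. ennreal (cmod (mtrace (N + m) (mmult (N + m) (madj (N + m) (blockU (N + m) N \<phi> V))
      ((\<lambda>(\<phi>', V'). blockU (N + m) N \<phi>' V') y))) ^ 4) \<partial>(phases N \<Otimes>\<^sub>M H))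
    = ennreal (2 * real N ^ 2 - real N + 4 * real (min 1 m) * real N + real (min 2 m))"
proof -
  let ?U = "\<lambda>(\<phi>', V'). blockU (N + m) N \<phi>' V'"
  let ?g = "\<lambda>y. ennreal (cmod (mtrace (N + m) (mmult (N + m) (madj (N + m) (blockU (N + m) N \<phi> V))
      (?U y))) ^ 4)"
  let ?X = "phase_sum N (\<lambda>j. cnj (exp (\<i> * complex_of_real (\<phi> j))))"
  have "(\<lambda>y. mtrace (N + m) (mmult (N + m) (madj (N + m) (blockU (N + m) N \<phi> V)) (?U y)))
      \<in> borel_measurable (phases N \<Otimes>\<^sub>M H)"
    by (rule measurable_mtrace_madj_mmult[OF measurable_const measurable_blockU])
      (simp add: space_matspace)
  then have "?g \<in> borel_measurable (phases N \<Otimes>\<^sub>M H)" by measurable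
  then have "integral\<^sup>N (phases N \<Otimes>\<^sub>M H) ?g = (\<integral>\<^sup>+\<phi>'. \<integral>\<^sup>+V'. ?g (\<phi>', V') \<partial>H \<partial>phases N)"
    by (rule nn_integral_fst[symmetric])
  also have "\<dots> = (\<integral>\<^sup>+\<phi>'. \<integral>\<^sup>+V'. ennreal (cmod (?X \<phi>' + mtrace m (mmult m (madj m V) V')) ^ 4)
      \<partial>H \<partial>phases N)"
    by (simp only: prod.case mtrace_blockU)
  also have "\<dots> = (\<integral>\<^sup>+\<phi>'. ennreal (cmod (?X \<phi>') ^ 4 + 4 * real (min 1 m) * cmod (?X \<phi>') ^ 2
      + real (min 2 m)) \<partial>phases N)"
    by (simp only: nn_integral_mtrace_shift_pow4[OF V])
  also have "\<dots> = ennreal (2 * real N ^ 2 - real N + 4 * real (min 1 m) * real N + real (min 2 m))"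
  proof (rule nn_integral_affine_combination[OF prob_space_phases])
    have "cmod (cnj (exp (\<i> * complex_of_real (\<phi> j)))) = 1" for j by simp
    note moments = phase_sum_moments[OF this, of N]
    show "(\<integral>\<^sup>+\<phi>'. ennreal (cmod (?X \<phi>') ^ 4) \<partial>phases N) = ennreal (2 * real N ^ 2 - real N)"
      "(\<integral>\<^sup>+\<phi>'. ennreal (cmod (?X \<phi>') ^ 2) \<partial>phases N) = ennreal (real N)"
      using moments by simp_all
  qed (use real_le_two_power2[of N] in simp_all)
  finally show ?thesis .
qed

lemma frame_potential2_RH_ensemble:
  "frame_potential2 (N + m) (RH_ensemble (N + m) N H)
     = 2 * real N ^ 2 - real N + 4 * real (min 1 m) * real N + real (min 2 m)"
  (is "_ = ?c")
proof -
  let ?M = "phases N \<Otimes>\<^sub>M H" and ?U = "\<lambda>(\<phi>, V). blockU (N + m) N \<phi> V"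
  let ?g = "\<lambda>x y. ennreal (cmod (mtrace (N + m) (mmult (N + m) (madj (N + m) (?U x)) (?U y))) ^ 4)"
  interpret phases: prob_space "phases N" by (rule prob_space_phases)
  interpret pair: prob_space ?M by (intro prob_space_pair prob_space_phases prob_space_axioms)
  have U: "?U \<in> measurable ?M matspace" by (rule measurable_blockU)
  have "(\<lambda>p. mtrace (N + m) (mmult (N + m) (madj (N + m) (?U (fst p))) (?U (snd p))))
      \<in> borel_measurable (?M \<Otimes>\<^sub>M ?M)"
    by (rule measurable_mtrace_madj_mmult[OF measurable_compose[OF measurable_fst U]
          measurable_compose[OF measurable_snd U]])
  then have "(\<lambda>p. ?g (fst p) (snd p)) \<in> borel_measurable (?M \<Otimes>\<^sub>M ?M)" by measurable
  from pair.borel_measurable_nn_integral_fst[OF this]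
  have "(\<lambda>x. \<integral>\<^sup>+y. ?g x y \<partial>?M) \<in> borel_measurable ?M" by (simp only: fst_conv snd_conv)
  then have "(\<integral>\<^sup>+x. \<integral>\<^sup>+y. ?g x y \<partial>?M \<partial>?M)
      = (\<integral>\<^sup>+\<phi>. \<integral>\<^sup>+V. (\<integral>\<^sup>+y. ?g (\<phi>, V) y \<partial>?M) \<partial>H \<partial>phases N)"
    by (rule nn_integral_fst[symmetric])
  also have "\<dots> = (\<integral>\<^sup>+\<phi>. \<integral>\<^sup>+V. ennreal ?c \<partial>H \<partial>phases N)"
  proof (rule nn_integral_cong, rule nn_integral_cong_AE)
    show "AE V in H. (\<integral>\<^sup>+y. ?g (\<phi>, V) y \<partial>?M) = ennreal ?c" for \<phi>
      using AE_unitary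
      by eventually_elim (simp only: prod.case nn_integral_mtrace_blockU_pow4)
  qed
  also have "\<dots> = ennreal ?c" by (simp add: emeasure_space_1 phases.emeasure_space_1)
  finally have "(\<integral>\<^sup>+x. \<integral>\<^sup>+y. ?g x y \<partial>?M \<partial>?M) = ennreal ?c" .
  moreover have "RH_ensemble (N + m) N H = distr ?M matspace ?U"
    by (simp add: RH_ensemble_def phases_def)
  moreover have "0 \<le> ?c" using real_le_two_power2[of N] by simp
  ultimately show ?thesis
    using frame_potential2_distr[OF pair.prob_space_axioms U, of "N + m"]
    by (simp only: enn2real_ennreal)
qed

end

theorem mainTheorem7:
  fixes d N :: nat and H :: "cmat measure"
  assumes "d \<ge> 2" and "N \<le> d" and "haar_unitary (d - N) H"
  shows "frame_potential2 d (RH_ensemble d N H) =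
           (if N \<le> d - 2 then 2 * real N ^ 2 + 3 * real N + 2
            else 2 * real d ^ 2 - real d)"
proof -
  define m where "m = d - N"
  have d: "d = N + m" using assms(2) by (simp add: m_def)
  interpret haar_unitary_measure m H using assms(3) by unfold_locales (simp add: m_def)
  have F: "frame_potential2 d (RH_ensemble d N H)
      = 2 * real N ^ 2 - real N + 4 * real (min 1 m) * real N + real (min 2 m)"
    unfolding d by (rule frame_potential2_RH_ensemble)
  consider "2 \<le> m" | "m = 1" | "m = 0" by linarith
  then show ?thesis
  proof cases
    case 1
    then have "N \<le> d - 2" using d by linarith
    with 1 F show ?thesis by simp
  next
    case 2
    then have "\<not> N \<le> d - 2" using d assms(1) by linarith
    with 2 F d show ?thesis by (simp add: power2_eq_square algebra_simps)
  next
    case 3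
    then have "\<not> N \<le> d - 2" using d assms(1) by linarith
    with 3 F d show ?thesis by simp
  qed
qed

end
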